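(* There exists a function $f:\mathbb{R}^{\mathbb{Z}_<}\to\mathbb{R}^{\mathbb{Z}_<}$ that satisfies $\mathrm{ED}_{\mathrm{CLASS}}$ but does not satisfy $\mathrm{ED}$.
   Context: $\mathbb{R}^{\mathbb{Z}_<}$ is the set of formal series $\sum_{i\ge -k}a_i\epsilon^i$ ($k\in\mathbb{N}\cup\{0\}$, $a_i\in\mathbb{R}$), with coefficientwise addition, Cauchy-product multiplication and lexicographic order; $|\cdot|$ is the associated absolute value. A function $f$ satisfies $\mathrm{ED}_{\mathrm{CLASS}}$ iff at every point $\mathbf{a}$ of its domain, for every $n\in\mathbb{N}$ there is $m\in\mathbb{N}$ such that $|f(\mathbf{x})-f(\mathbf{a})|<1/n$ whenever $|\mathbf{x}-\mathbf{a}|<1/m$. It satisfies $\mathrm{ED}$ iff at every point $\mathbf{c}$, for every $\iota_1\in\mathbb{R}^{\mathbb{Z}_<}$ with $\iota_1>0$ there is $\iota_2\in\mathbb{R}^{\mathbb{Z}_<}$ with $\iota_2>0$ such that $|f(\mathbf{x})-f(\mathbf{c})|<\iota_1$ whenever $|\mathbf{x}-\mathbf{c}|<\iota_2$. *)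

theory Defs
  imports "HOL-Computational_Algebra.Formal_Laurent_Series"
begin

text \<open>The field R^{Z_<} of formal Laurent series sum_{i >= -k} a_i eps^i over the reals
  is the library type real fls (finitely many negative-index terms).\<close>

definition lpos :: "real fls \<Rightarrow> bool" where
  "lpos x \<longleftrightarrow> x \<noteq> 0 \<and> fls_nth x (fls_subdegree x) > 0"

definition lless :: "real fls \<Rightarrow> real fls \<Rightarrow> bool" where
  "lless x y \<longleftrightarrow> lpos (y - x)"

definition labs :: "real fls \<Rightarrow> real fls" where
  "labs x = (if lpos x \<or> x = 0 then x else - x)"

definition ED_CLASS :: "(real fls \<Rightarrow> real fls) \<Rightarrow> bool" where
  "ED_CLASS f \<longleftrightarrow>
     (\<forall>a. \<forall>n::nat. n \<ge> 1 \<longrightarrow> (\<exists>m::nat. m \<ge> 1 \<and>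
        (\<forall>x. lless (labs (x - a)) (1 / of_nat m) \<longrightarrow>
              lless (labs (f x - f a)) (1 / of_nat n))))"

definition ED :: "(real fls \<Rightarrow> real fls) \<Rightarrow> bool" where
  "ED f \<longleftrightarrow>
     (\<forall>c. \<forall>\<iota>1. lpos \<iota>1 \<longrightarrow> (\<exists>\<iota>2. lpos \<iota>2 \<and>
        (\<forall>x. lless (labs (x - c)) \<iota>2 \<longrightarrow> lless (labs (f x - f c)) \<iota>1)))"

end

theory Submission
  imports Defs
begin

text \<open>The witness is the function that takes the infinitesimal value \<open>\<epsilon>\<close> at \<open>0\<close> and
  vanishes elsewhere. Its jumps are infinitesimal, hence smaller than every \<open>1/n\<close>,
  so it is classically continuous. But with \<open>\<iota>1 = \<epsilon>\<close> at \<open>c = 0\<close> no \<open>\<iota>2 > 0\<close> works: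
  the point \<open>\<iota>2/2\<close> is a nonzero point in the \<open>\<iota>2\<close>-neighbourhood where the jump
  equals \<open>\<epsilon>\<close>.\<close>

lemma lpos_fls_const: "lpos (fls_const c) \<longleftrightarrow> 0 < c"
  by (auto simp: lpos_def)

lemma lpos_fls_X: "lpos fls_X"
  by (simp add: lpos_def)

lemma not_lless_self: "\<not> lless x x"
  by (simp add: lless_def lpos_def)

lemma labs_uminus: "labs (- x) = labs x"
  by (auto simp: labs_def lpos_def)

lemma labs_zero: "labs 0 = 0"
  by (simp add: labs_def)

lemma labs_of_lpos: "lpos x \<Longrightarrow> labs x = x"
  by (simp add: labs_def)

lemma fls_subdegree_labs: "fls_subdegree (labs x) = fls_subdegree x"
  by (simp add: labs_def)

lemma one_divide_of_nat_fls:
  "(1 / of_nat n :: 'a::field fls) = fls_const (1 / of_nat n)"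
  by (simp add: fls_of_nat fls_const_divide_const[symmetric])

lemma lless_fls_const_if_subdegree_pos:
  assumes "0 < c" and "0 < fls_subdegree d"
  shows "lless d (fls_const c)"
proof -
  have "d \<noteq> 0"
    using assms(2) by auto
  have "fls_subdegree (fls_const c - d) = 0"
    using fls_subdegree_diff_eq1[of "fls_const c" d] assms by (simp add: fls_const_nonzero)
  moreover have "fls_nth (fls_const c - d) 0 = c"
    using assms(2) by (simp add: fls_eq0_below_subdegree)
  moreover from this have "fls_const c - d \<noteq> 0"
    using assms(1) by auto
  ultimately show ?thesis
    using assms(1) by (simp add: lless_def lpos_def)
qed

lemma lless_zero_iff_lpos: "lless 0 x \<longleftrightarrow> lpos x"
  by (simp add: lless_def)

lemma exists_nonzero_labs_lless:
  assumes "lpos e"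
  shows "\<exists>x. x \<noteq> 0 \<and> lless (labs x) e"
proof (intro exI conjI)
  have "e \<noteq> 0"
    using assms by (simp add: lpos_def)
  then show "e / 2 \<noteq> 0"
    by simp
  have half: "e / 2 = fls_const (1/2) * e"
    by (simp add: fls_const_divide_const[symmetric])
  have "lpos (e / 2)"
    using assms \<open>e \<noteq> 0\<close> by (simp add: half lpos_def)
  moreover have "e - e / 2 = e / 2"
    by simp
  ultimately show "lless (labs (e / 2)) e"
    by (simp add: labs_of_lpos lless_def)
qed

lemma ED_CLASS_if_infinitesimal_jumps:
  assumes "\<And>x a. f x = f a \<or> 0 < fls_subdegree (f x - f a)"
  shows "ED_CLASS f"
  unfolding ED_CLASS_def
proof (intro allI impI exI[of _ 1] conjI)
  fix a x and n :: nat
  assume "1 \<le> n"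
  then have "(0::real) < 1 / of_nat n"
    by simp
  then show "lless (labs (f x - f a)) (1 / of_nat n)"
    using assms[of x a] lless_fls_const_if_subdegree_pos[of _ "labs (f x - f a)"]
    by (auto simp: one_divide_of_nat_fls fls_subdegree_labs labs_zero lless_zero_iff_lpos
        lpos_fls_const)
qed simp

definition eps_at_zero :: "real fls \<Rightarrow> real fls" where
  "eps_at_zero x = (if x = 0 then fls_X else 0)"

lemma ED_CLASS_eps_at_zero: "ED_CLASS eps_at_zero"
  by (rule ED_CLASS_if_infinitesimal_jumps) (simp add: eps_at_zero_def)

lemma not_ED_eps_at_zero: "\<not> ED eps_at_zero"
proof
  assume "ED eps_at_zero"
  then obtain \<iota>2 where "lpos \<iota>2"
    and near: "\<And>x. lless (labs x) \<iota>2 \<Longrightarrow> lless (labs (eps_at_zero x - eps_at_zero 0)) fls_X"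
    using lpos_fls_X unfolding ED_def by (metis diff_zero)
  obtain x where "x \<noteq> 0" and "lless (labs x) \<iota>2"
    using exists_nonzero_labs_lless[OF \<open>lpos \<iota>2\<close>] by blast
  have "eps_at_zero x - eps_at_zero 0 = - fls_X"
    using \<open>x \<noteq> 0\<close> by (simp add: eps_at_zero_def)
  then have "labs (eps_at_zero x - eps_at_zero 0) = fls_X"
    by (simp add: labs_uminus labs_of_lpos lpos_fls_X)
  then show False
    using near[OF \<open>lless (labs x) \<iota>2\<close>] not_lless_self by simp
qed

theorem mainTheorem5:
  shows "\<exists>f :: real fls \<Rightarrow> real fls. ED_CLASS f \<and> \<not> ED f"
  using ED_CLASS_eps_at_zero not_ED_eps_at_zero by blast

end
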